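(* Let $B(x)=\frac{x}{1+x^2}$, $B_0(x)=x$ and $B_j(x)=B(B_{j-1}(x))$ for $j\ge1$ (rational functions of $x$). For every $j\ge0$, the equation $B_j(x)=-1$ has at least one root $x\in\mathbb{C}$, and this root is not a root of $B_{j'}(x)=-1$ for any $j'\neq j$. *)

theory Defs
  imports Complex_Main
begin

definition Bmap :: "complex \<Rightarrow> complex" where
  "Bmap x = x / (1 + x\<^sup>2)"

definition Bit :: "nat \<Rightarrow> complex \<Rightarrow> complex" where
  "Bit j = (Bmap ^^ j)"

end

theory Submission
  imports Defs
begin

text \<open>Every nonzero w has a B-preimage (a root of w x^2 - x + w), and preimages of nonzero
  values are nonzero, so B_j attains -1. Conversely B(-1) = -1/2, and B maps the interval
  [-1/2, 0) into itself, so the orbit of -1 never returns to -1: a root of B_j = -1 cannot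
  be a root of B_k = -1 for k \<noteq> j, since one of the two iterates factors through the other.\<close>

lemma Bit_add: "Bit (m + n) x = Bit m (Bit n x)"
  by (simp add: Bit_def funpow_add)

lemma Bit_Suc: "Bit (Suc n) x = Bit n (Bmap x)"
  by (simp add: Bit_def funpow_Suc_right del: funpow.simps)

lemma Bmap_surj_nonzero:
  assumes "w \<noteq> 0"
  obtains x where "Bmap x = w"
proof -
  define s where "s = csqrt (1 - 4 * w\<^sup>2)"
  define x where "x = (1 + s) / (2 * w)"
  have "s\<^sup>2 = 1 - 4 * w\<^sup>2"
    unfolding s_def by simp
  moreover have "w * x\<^sup>2 - x + w = (s\<^sup>2 - 1 + 4 * w\<^sup>2) / (4 * w)"
    unfolding x_def using assms by (simp add: field_simps power2_eq_square)
  ultimately have quadratic: "x = w * (1 + x\<^sup>2)"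
    by (simp add: algebra_simps)
  moreover have "1 + x\<^sup>2 \<noteq> 0"
  proof
    assume "1 + x\<^sup>2 = 0"
    with quadratic have "x = 0" by simp
    with \<open>1 + x\<^sup>2 = 0\<close> show False by simp
  qed
  ultimately have "Bmap x = w"
    unfolding Bmap_def by (metis nonzero_mult_div_cancel_right)
  then show ?thesis ..
qed

lemma Bit_surj_nonzero:
  assumes "w \<noteq> 0"
  obtains x where "Bit n x = w"
  using assms
proof (induction n arbitrary: w thesis)
  case 0
  then show ?case by (simp add: Bit_def)
next
  case (Suc n)
  obtain v where v: "Bmap v = w"
    using Bmap_surj_nonzero Suc.prems(2) by blast
  have "v \<noteq> 0"
    using v Suc.prems(2) by (auto simp: Bmap_def)
  then obtain x where "Bit n x = v"
    using Suc.IH by blast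
  then have "Bit (Suc n) x = w"
    using v by (simp add: Bit_def)
  then show ?case by (rule Suc.prems(1))
qed

lemma Bmap_of_real: "Bmap (of_real r) = of_real (r / (1 + r\<^sup>2))"
  by (simp add: Bmap_def)

lemma Bmap_negative_real_bounds:
  fixes r :: real
  assumes "r < 0"
  shows "r \<le> r / (1 + r\<^sup>2)" and "r / (1 + r\<^sup>2) < 0"
proof -
  have pos: "0 < 1 + r\<^sup>2"
    by (simp add: add_pos_nonneg)
  have "r * (1 + r\<^sup>2) \<le> r"
    using mult_left_mono_neg[of 1 "1 + r\<^sup>2" r] assms by simp
  then show "r \<le> r / (1 + r\<^sup>2)"
    using pos by (simp add: pos_le_divide_eq)
  show "r / (1 + r\<^sup>2) < 0"
    using pos assms by (simp add: divide_neg_pos)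
qed

lemma Bit_negative_real:
  fixes r :: real
  assumes "r < 0"
  obtains s where "r \<le> s" "s < 0" "Bit n (of_real r) = of_real s"
  using assms
proof (induction n arbitrary: r thesis)
  case 0
  then show ?case by (simp add: Bit_def)
next
  case (Suc n)
  let ?r' = "r / (1 + r\<^sup>2)"
  have "r \<le> ?r'" "?r' < 0"
    using Bmap_negative_real_bounds Suc.prems(2) by auto
  then obtain s where "?r' \<le> s" "s < 0" "Bit n (of_real ?r') = of_real s"
    using Suc.IH by blast
  with \<open>r \<le> ?r'\<close> show ?case
    by (intro Suc.prems(1)[of s]) (simp_all add: Bit_Suc Bmap_of_real)
qed

lemma Bit_Suc_neg_one: "Bit (Suc n) (-1) \<noteq> -1"
proof -
  have "Bit (Suc n) (-1) = Bit n (of_real (-1/2))"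
    by (simp add: Bit_Suc Bmap_def)
  moreover obtain s :: real where "-1/2 \<le> s" "Bit n (of_real (-1/2)) = of_real s"
    using Bit_negative_real[of "-1/2" n] by auto
  moreover have "(of_real s :: complex) \<noteq> -1"
  proof
    assume "(of_real s :: complex) = -1"
    then have "s = -1"
      by (metis of_real_1 of_real_eq_iff of_real_minus)
    with \<open>-1/2 \<le> s\<close> show False by simp
  qed
  ultimately show ?thesis by simp
qed

lemma Bit_neg_one_not_repeated:
  assumes "Bit j x = -1" and "j < k"
  shows "Bit k x \<noteq> -1"
proof -
  from \<open>j < k\<close> obtain n where "k = Suc n + j"
    by (auto dest: less_imp_Suc_add)
  then have "Bit k x = Bit (Suc n) (-1)"
    using assms(1) by (simp only: Bit_add)
  then show ?thesis
    using Bit_Suc_neg_one by simp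
qed

theorem proposition2p6:
  fixes j :: nat
  shows "\<exists>x::complex. Bit j x = -1 \<and> (\<forall>j'. j' \<noteq> j \<longrightarrow> Bit j' x \<noteq> -1)"
proof -
  obtain x where x: "Bit j x = -1"
    using Bit_surj_nonzero[of "-1" j] by auto
  have "Bit j' x \<noteq> -1" if "j' \<noteq> j" for j'
    using that Bit_neg_one_not_repeated[OF x] Bit_neg_one_not_repeated[of j' x j] x
    by (metis linorder_neqE_nat)
  with x show ?thesis by blast
qed

end
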